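(* For integers $k\ge2$, let $F_k$ be the non-abelian free group of rank $k$. Then the true prosoluble completions $P\mathcal{S}(F_k)$, $k\ge 2$, are pairwise non-isomorphic (as topological groups).
   Context: For a group $\Gamma$, the true prosoluble completion $P\mathcal{S}(\Gamma)$ is the completion of $\Gamma/\bigcap N$ for the topology whose basis of neighbourhoods of the identity consists of the images of the normal subgroups $N$ of $\Gamma$ with $\Gamma/N$ soluble; equivalently it is the inverse limit $\varprojlim\Gamma/N$ over such $N$, with the inverse limit topology. *)

theory Defs
  imports "HOL-Analysis.Analysis" "HOL-Algebra.Algebra"
begin

text \<open>Letters are pairs (i, b): generator x_i (b = True) or its inverse (b = False).\<close>

definition letter_inv :: "nat \<times> bool \<Rightarrow> nat \<times> bool" where
  "letter_inv x = (fst x, \<not> snd x)"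

fun red_cons :: "nat \<times> bool \<Rightarrow> (nat \<times> bool) list \<Rightarrow> (nat \<times> bool) list" where
  "red_cons x [] = [x]"
| "red_cons x (y # ys) = (if y = letter_inv x then ys else x # y # ys)"

definition reduce :: "(nat \<times> bool) list \<Rightarrow> (nat \<times> bool) list" where
  "reduce xs = foldr red_cons xs []"

fun is_reduced :: "(nat \<times> bool) list \<Rightarrow> bool" where
  "is_reduced [] = True"
| "is_reduced [x] = True"
| "is_reduced (x # y # ys) = (y \<noteq> letter_inv x \<and> is_reduced (y # ys))"

definition free_group :: "nat \<Rightarrow> (nat \<times> bool) list monoid" where
  "free_group k = \<lparr> carrier = {w. fst ` set w \<subseteq> {..<k} \<and> is_reduced w},
                    mult = (\<lambda>u v. reduce (u @ v)),
                    one = [] \<rparr>"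

definition sol_quot_index :: "('a, 'b) monoid_scheme \<Rightarrow> 'a set set" where
  "sol_quot_index \<Gamma> = {N. N \<lhd> \<Gamma> \<and> solvable (\<Gamma> Mod N)}"

text \<open>Inverse limit of the quotients \<Gamma>/N: compatible families of cosets
  (for N \<subseteq> M the coset at N maps to, i.e. is contained in, the coset at M).\<close>
definition PS_carrier :: "('a, 'b) monoid_scheme \<Rightarrow> ('a set \<Rightarrow> 'a set) set" where
  "PS_carrier \<Gamma> = {f \<in> (\<Pi>\<^sub>E N\<in>sol_quot_index \<Gamma>. carrier (\<Gamma> Mod N)).
      \<forall>N\<in>sol_quot_index \<Gamma>. \<forall>M\<in>sol_quot_index \<Gamma>. N \<subseteq> M \<longrightarrow> f N \<subseteq> f M}"

definition PS_group :: "('a, 'b) monoid_scheme \<Rightarrow> ('a set \<Rightarrow> 'a set) monoid" where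
  "PS_group \<Gamma> = \<lparr> carrier = PS_carrier \<Gamma>,
      mult = (\<lambda>f g. \<lambda>N\<in>sol_quot_index \<Gamma>. f N \<otimes>\<^bsub>\<Gamma> Mod N\<^esub> g N),
      one = (\<lambda>N\<in>sol_quot_index \<Gamma>. \<one>\<^bsub>\<Gamma> Mod N\<^esub>) \<rparr>"

definition PS_topology :: "('a, 'b) monoid_scheme \<Rightarrow> ('a set \<Rightarrow> 'a set) topology" where
  "PS_topology \<Gamma> = subtopology
      (product_topology (\<lambda>N. discrete_topology (carrier (\<Gamma> Mod N))) (sol_quot_index \<Gamma>))
      (PS_carrier \<Gamma>)"

definition top_group_iso ::
  "('a, 'c) monoid_scheme \<Rightarrow> 'a topology \<Rightarrow> ('b, 'd) monoid_scheme \<Rightarrow> 'b topology \<Rightarrow> bool" where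
  "top_group_iso G T1 H T2 \<longleftrightarrow> (\<exists>h. h \<in> iso G H \<and> homeomorphic_map T1 T2 h)"

end

theory Submission
  imports Defs
begin

(* A continuous homomorphism from PS(F_k) to Z/2 is determined by its values on the images
   of the k free generators, because F_k is dense in its completion. Conversely, each of the
   2^k assignments of values to the generators defines a homomorphism F_k -> Z/2 whose kernel
   has abelian, hence soluble, quotient; that kernel is one of the coordinates of the inverse
   limit, and reading off this coordinate extends the homomorphism continuously to PS(F_k).
   So PS(F_k) has exactly 2^k continuous homomorphisms to Z/2, and this number is preserved by
   isomorphisms of topological groups. The count works for every rank. *)

section \<open>Reduced words\<close>

lemma letter_inv_letter_inv [simp]: "letter_inv (letter_inv x) = x"
  by (simp add: letter_inv_def)

lemma fst_letter_inv [simp]: "fst (letter_inv x) = fst x"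
  by (simp add: letter_inv_def)

lemma is_reduced_ConsD: "is_reduced (y # ys) \<Longrightarrow> is_reduced ys"
  by (cases ys) auto

lemma is_reduced_red_cons: "is_reduced ys \<Longrightarrow> is_reduced (red_cons x ys)"
  by (cases ys) (auto dest: is_reduced_ConsD)

lemma is_reduced_foldr_red_cons: "is_reduced ys \<Longrightarrow> is_reduced (foldr red_cons xs ys)"
  by (induction xs) (auto intro: is_reduced_red_cons)

lemma is_reduced_reduce: "is_reduced (reduce xs)"
  unfolding reduce_def by (rule is_reduced_foldr_red_cons) simp

lemma red_cons_reduced: "is_reduced (x # ys) \<Longrightarrow> red_cons x ys = x # ys"
  by (cases ys) auto

lemma reduce_reduced: "is_reduced xs \<Longrightarrow> reduce xs = xs"
proof (induction xs)
  case (Cons x xs)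
  then have "reduce xs = xs"
    using is_reduced_ConsD by blast
  then show ?case
    using red_cons_reduced[OF Cons.prems] by (simp add: reduce_def)
qed (simp add: reduce_def)

lemma red_cons_red_cons_letter_inv:
  assumes "is_reduced ys"
  shows "red_cons x (red_cons (letter_inv x) ys) = ys"
proof (cases ys)
  case (Cons y ys')
  show ?thesis
  proof (cases "y = x")
    case True
    then have "red_cons x ys' = x # ys'"
      using assms Cons by (intro red_cons_reduced) simp
    then show ?thesis
      using Cons True by simp
  qed (use Cons in simp)
qed simp

lemma foldr_red_cons_red_cons:
  assumes "is_reduced zs"
  shows "foldr red_cons (red_cons x ys) zs = red_cons x (foldr red_cons ys zs)"
proof (cases ys)
  case (Cons y ys')
  show ?thesis
  proof (cases "y = letter_inv x")
    case True
    then show ?thesis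
      using Cons red_cons_red_cons_letter_inv[OF is_reduced_foldr_red_cons[OF assms]]
      by simp
  qed (use Cons in simp)
qed simp

lemma foldr_red_cons_foldr_red_cons:
  "is_reduced zs \<Longrightarrow> foldr red_cons (foldr red_cons xs ys) zs = foldr red_cons xs (foldr red_cons ys zs)"
  by (induction xs) (simp_all add: foldr_red_cons_red_cons)

lemma reduce_append: "reduce (xs @ ys) = foldr red_cons xs (reduce ys)"
  by (simp add: reduce_def)

lemma foldr_red_cons_inverse: "foldr red_cons (rev (map letter_inv xs)) xs = []"
proof (induction xs)
  case (Cons x xs)
  have "red_cons (letter_inv x) (x # xs) = xs"
    by simp
  with Cons show ?case
    by simp
qed simp

lemma letters_red_cons: "fst ` set (red_cons x ys) \<subseteq> insert (fst x) (fst ` set ys)"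
  by (cases ys) auto

lemma letters_foldr_red_cons: "fst ` set (foldr red_cons xs ys) \<subseteq> fst ` set xs \<union> fst ` set ys"
proof (induction xs)
  case (Cons x xs)
  then have "fst ` set (red_cons x (foldr red_cons xs ys)) \<subseteq> insert (fst x) (fst ` set xs \<union> fst ` set ys)"
    using letters_red_cons[of x "foldr red_cons xs ys"] by blast
  then show ?case
    by auto
qed simp

lemma letters_reduce: "fst ` set (reduce xs) \<subseteq> fst ` set xs"
  using letters_foldr_red_cons[of xs "[]"] by (simp add: reduce_def)

lemma carrier_free_group: "carrier (free_group k) = {w. fst ` set w \<subseteq> {..<k} \<and> is_reduced w}"
  by (simp add: free_group_def)

lemma mult_free_group: "u \<otimes>\<^bsub>free_group k\<^esub> v = reduce (u @ v)"
  by (simp add: free_group_def)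

lemma one_free_group: "\<one>\<^bsub>free_group k\<^esub> = []"
  by (simp add: free_group_def)

lemma reduce_in_carrier_free_group:
  "fst ` set w \<subseteq> {..<k} \<Longrightarrow> reduce w \<in> carrier (free_group k)"
  using letters_reduce[of w] is_reduced_reduce[of w] by (auto simp: carrier_free_group)

lemma generator_in_carrier_free_group: "i < k \<Longrightarrow> [(i, b)] \<in> carrier (free_group k)"
  by (simp add: carrier_free_group)

lemma group_free_group: "group (free_group k)"
proof (rule groupI)
  fix x y
  assume "x \<in> carrier (free_group k)" "y \<in> carrier (free_group k)"
  then show "x \<otimes>\<^bsub>free_group k\<^esub> y \<in> carrier (free_group k)"
    unfolding mult_free_group
    by (intro reduce_in_carrier_free_group) (auto simp: carrier_free_group)
next
  fix x y z
  assume "x \<in> carrier (free_group k)" "y \<in> carrier (free_group k)" "z \<in> carrier (free_group k)"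
  then have red: "is_reduced x" "is_reduced y" "is_reduced z"
    by (auto simp: carrier_free_group)
  have "reduce (reduce (x @ y) @ z) = foldr red_cons (foldr red_cons x y) z"
    using red by (simp add: reduce_append reduce_reduced)
  also have "\<dots> = foldr red_cons x (foldr red_cons y z)"
    using red by (simp add: foldr_red_cons_foldr_red_cons)
  also have "\<dots> = reduce (x @ reduce (y @ z))"
    using red by (simp add: reduce_append reduce_reduced is_reduced_foldr_red_cons)
  finally show "x \<otimes>\<^bsub>free_group k\<^esub> y \<otimes>\<^bsub>free_group k\<^esub> z =
      x \<otimes>\<^bsub>free_group k\<^esub> (y \<otimes>\<^bsub>free_group k\<^esub> z)"
    by (simp add: mult_free_group)
next
  fix x
  assume x: "x \<in> carrier (free_group k)"
  then show "\<one>\<^bsub>free_group k\<^esub> \<otimes>\<^bsub>free_group k\<^esub> x = x"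
    by (simp add: carrier_free_group mult_free_group one_free_group reduce_reduced)
  define y where "y = reduce (rev (map letter_inv x))"
  have "y \<in> carrier (free_group k)"
    using x unfolding y_def
    by (intro reduce_in_carrier_free_group) (auto simp: carrier_free_group)
  moreover have "reduce (y @ x) = []"
  proof -
    have "is_reduced x"
      using x by (simp add: carrier_free_group)
    then have "reduce (y @ x) = foldr red_cons (rev (map letter_inv x)) (foldr red_cons [] x)"
      by (simp add: y_def reduce_append reduce_reduced) (simp add: reduce_def foldr_red_cons_foldr_red_cons)
    then show ?thesis
      by (simp add: foldr_red_cons_inverse)
  qed
  ultimately show "\<exists>y\<in>carrier (free_group k). y \<otimes>\<^bsub>free_group k\<^esub> x = \<one>\<^bsub>free_group k\<^esub>"
    by (auto simp: mult_free_group one_free_group)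
qed (simp add: carrier_free_group one_free_group)

section \<open>Homomorphisms from the free group to \<int>/2\<close>

definition bool_group :: "bool monoid" where
  "bool_group = \<lparr>carrier = UNIV, mult = (\<lambda>a b. a \<noteq> b), one = False\<rparr>"

lemma bool_group_simps [simp]:
  "carrier bool_group = UNIV" "a \<otimes>\<^bsub>bool_group\<^esub> b = (a \<noteq> b)" "\<one>\<^bsub>bool_group\<^esub> = False"
  by (simp_all add: bool_group_def)

lemma group_bool_group: "group bool_group"
  by (rule groupI) auto

fun word_parity :: "(nat \<Rightarrow> bool) \<Rightarrow> (nat \<times> bool) list \<Rightarrow> bool" where
  "word_parity c [] = False"
| "word_parity c (x # xs) = (c (fst x) \<noteq> word_parity c xs)"

lemma word_parity_red_cons: "word_parity c (red_cons x ys) = (c (fst x) \<noteq> word_parity c ys)"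
  by (cases ys) auto

lemma word_parity_foldr_red_cons:
  "word_parity c (foldr red_cons xs ys) = (word_parity c xs \<noteq> word_parity c ys)"
  by (induction xs) (auto simp: word_parity_red_cons)

lemma word_parity_reduce: "word_parity c (reduce xs) = word_parity c xs"
  using word_parity_foldr_red_cons[of c xs "[]"] by (simp add: reduce_def)

lemma word_parity_hom: "word_parity c \<in> hom (free_group k) bool_group"
  by (rule homI) (auto simp: mult_free_group reduce_append word_parity_foldr_red_cons word_parity_reduce)

lemma word_parity_cong: "(\<And>i. i \<in> fst ` set w \<Longrightarrow> c i = c' i) \<Longrightarrow> word_parity c w = word_parity c' w"
  by (induction w) auto

lemma hom_free_group_bool_eq_word_parity:
  assumes \<psi>: "\<psi> \<in> hom (free_group k) bool_group" and w: "w \<in> carrier (free_group k)"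
  shows "\<psi> w = word_parity (\<lambda>i. \<psi> [(i, True)]) w"
proof -
  interpret group_hom "free_group k" bool_group \<psi>
    using \<psi> group_free_group group_bool_group by (simp add: group_hom_def group_hom_axioms_def)
  show ?thesis
    using w
  proof (induction w)
    case Nil
    show ?case
      using hom_one by (simp add: one_free_group)
  next
    case (Cons x w)
    obtain i b where x: "x = (i, b)" and i: "i < k"
      using Cons.prems by (cases x) (auto simp: carrier_free_group)
    have w: "w \<in> carrier (free_group k)"
      using Cons.prems is_reduced_ConsD[of x w] by (auto simp: carrier_free_group)
    have "x # w = [x] \<otimes>\<^bsub>free_group k\<^esub> w"
      using Cons.prems by (simp add: carrier_free_group mult_free_group reduce_reduced)
    then have "\<psi> (x # w) = (\<psi> [x] \<noteq> \<psi> w)"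
      using hom_mult[OF _ w, of "[x]"] i x generator_in_carrier_free_group by simp
    moreover have "\<psi> [(i, b)] = \<psi> [(i, True)]"
    proof (cases b)
      case False
      have "[(i, False)] \<otimes>\<^bsub>free_group k\<^esub> [(i, True)] = \<one>\<^bsub>free_group k\<^esub>"
        by (simp add: mult_free_group one_free_group reduce_def letter_inv_def)
      then have "\<psi> [(i, False)] \<otimes>\<^bsub>bool_group\<^esub> \<psi> [(i, True)] = False"
        using i hom_mult[of "[(i, False)]" "[(i, True)]"] hom_one generator_in_carrier_free_group
        by simp
      then show ?thesis
        using False by simp
    qed simp
    ultimately show ?case
      using Cons.IH[OF w] x by simp
  qed
qed

section \<open>Soluble quotients\<close>

lemma solvable_FactGroup_iff_derived:
  assumes "group G" "N \<lhd> G"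
  shows "solvable (G Mod N) \<longleftrightarrow> (\<exists>n. (derived G ^^ n) (carrier G) \<subseteq> N)"
proof -
  interpret normal N G
    by fact
  have hom: "group_hom G (G Mod N) (\<lambda>a. N #>\<^bsub>G\<^esub> a)"
    by (simp add: group_hom_def group_hom_axioms_def factorgroup_is_group r_coset_hom_Mod is_group)
  have image_eq_one: "(\<lambda>a. N #>\<^bsub>G\<^esub> a) ` D = {N} \<longleftrightarrow> D \<subseteq> N" if D: "subgroup D G" for D
  proof
    assume image: "(\<lambda>a. N #>\<^bsub>G\<^esub> a) ` D = {N}"
    show "D \<subseteq> N"
    proof
      fix a
      assume "a \<in> D"
      then show "a \<in> N"
        using image coset_join1[OF _ _ subgroup_axioms] subgroup.mem_carrier[OF D] by blast
    qed
  next
    assume "D \<subseteq> N"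
    then show "(\<lambda>a. N #>\<^bsub>G\<^esub> a) ` D = {N}"
      using coset_join2[OF _ subgroup_axioms] subgroup.mem_carrier[OF D] subgroup.one_closed[OF D]
      by blast
  qed
  have "solvable (G Mod N) \<longleftrightarrow> (\<exists>n. (derived (G Mod N) ^^ n) (carrier (G Mod N)) = {\<one>\<^bsub>G Mod N\<^esub>})"
    by (rule group.solvable_iff_trivial_derived_seq[OF factorgroup_is_group])
  also have "\<dots> \<longleftrightarrow> (\<exists>n. (\<lambda>a. N #>\<^bsub>G\<^esub> a) ` (derived G ^^ n) (carrier G) = {N})"
    using group_hom.exp_of_derived_img[OF hom, of "carrier G"] by (simp add: carrier_FactGroup)
  also have "\<dots> \<longleftrightarrow> (\<exists>n. (derived G ^^ n) (carrier G) \<subseteq> N)"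
    using image_eq_one exp_of_derived_is_subgroup[OF subgroup_self] by simp
  finally show ?thesis .
qed

lemma normal_if_in_sol_quot_index: "N \<in> sol_quot_index G \<Longrightarrow> N \<lhd> G"
  by (simp add: sol_quot_index_def)

lemma carrier_in_sol_quot_index:
  assumes "group G"
  shows "carrier G \<in> sol_quot_index G"
proof -
  have normal: "carrier G \<lhd> G"
    using group.normal_self[OF assms] .
  moreover have "solvable (G Mod carrier G)"
    unfolding solvable_FactGroup_iff_derived[OF assms normal] by (rule exI[of _ 0]) simp
  ultimately show ?thesis
    by (simp add: sol_quot_index_def)
qed

lemma Int_in_sol_quot_index:
  assumes G: "group G" and N: "N \<in> sol_quot_index G" and M: "M \<in> sol_quot_index G"
  shows "N \<inter> M \<in> sol_quot_index G"
proof -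
  interpret group G
    by (fact G)
  have normal: "N \<lhd> G" "M \<lhd> G" "N \<inter> M \<lhd> G"
    using N M normal_subgroup_intersect by (auto simp: sol_quot_index_def)
  obtain a b where a: "(derived G ^^ a) (carrier G) \<subseteq> N" and b: "(derived G ^^ b) (carrier G) \<subseteq> M"
    using N M solvable_FactGroup_iff_derived[OF G] normal by (auto simp: sol_quot_index_def)
  have "(derived G ^^ (a + b)) (carrier G) \<subseteq> (derived G ^^ a) (carrier G)"
    using mono_exp_of_derived[OF exp_of_derived_in_carrier[of "carrier G" b]] by (simp add: funpow_add)
  moreover have "(derived G ^^ (b + a)) (carrier G) \<subseteq> (derived G ^^ b) (carrier G)"
    using mono_exp_of_derived[OF exp_of_derived_in_carrier[of "carrier G" a]] by (simp add: funpow_add)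
  ultimately have "(derived G ^^ (a + b)) (carrier G) \<subseteq> N \<inter> M"
    using a b by (auto simp: add.commute)
  then show ?thesis
    using solvable_FactGroup_iff_derived[OF G normal(3)] normal(3) by (auto simp: sol_quot_index_def)
qed

lemma Inter_in_sol_quot_index:
  assumes "group G" "finite J" "J \<subseteq> sol_quot_index G"
  shows "carrier G \<inter> \<Inter>J \<in> sol_quot_index G"
  using assms(2,3)
proof (induction J rule: finite_induct)
  case empty
  then show ?case
    using carrier_in_sol_quot_index[OF assms(1)] by simp
next
  case (insert N J)
  have "carrier G \<inter> \<Inter>(insert N J) = N \<inter> (carrier G \<inter> \<Inter>J)"
    by auto
  with insert show ?case
    using Int_in_sol_quot_index[OF assms(1)] by simp
qed

lemma (in group_hom) derived_subset_kernel:
  assumes "comm_group H"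
  shows "derived G (carrier G) \<subseteq> kernel G H h"
  unfolding derived_def
proof (rule G.generate_subgroup_incl[OF _ subgroup_kernel])
  interpret H: comm_group H
    by (fact assms)
  show "derived_set G (carrier G) \<subseteq> kernel G H h"
  proof
    fix x
    assume "x \<in> derived_set G (carrier G)"
    then obtain a b where ab: "a \<in> carrier G" "b \<in> carrier G"
      and x: "x = a \<otimes>\<^bsub>G\<^esub> b \<otimes>\<^bsub>G\<^esub> inv\<^bsub>G\<^esub> a \<otimes>\<^bsub>G\<^esub> inv\<^bsub>G\<^esub> b"
      by blast
    have "h x = \<one>\<^bsub>H\<^esub>"
      using ab by (simp add: x H.m_assoc H.m_lcomm[of "h b" "inv\<^bsub>H\<^esub> h a"])
    then show "x \<in> kernel G H h"
      using ab by (simp add: x kernel_def)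
  qed
qed

lemma kernel_in_sol_quot_index:
  assumes "group_hom G H h" "comm_group H"
  shows "kernel G H h \<in> sol_quot_index G"
proof -
  have G: "group G"
    using assms(1) by (simp add: group_hom_def)
  have normal: "kernel G H h \<lhd> G"
    using group_hom.normal_kernel[OF assms(1)] .
  have "solvable (G Mod kernel G H h)"
    unfolding solvable_FactGroup_iff_derived[OF G normal]
    by (rule exI[of _ 1]) (simp add: group_hom.derived_subset_kernel[OF assms])
  with normal show ?thesis
    by (simp add: sol_quot_index_def)
qed

section \<open>The true prosoluble completion\<close>

definition PS_completion_map :: "('a, 'b) monoid_scheme \<Rightarrow> 'a \<Rightarrow> 'a set \<Rightarrow> 'a set" where
  "PS_completion_map G w = (\<lambda>N\<in>sol_quot_index G. N #>\<^bsub>G\<^esub> w)"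

lemma topspace_PS_topology: "topspace (PS_topology G) = PS_carrier G"
  by (auto simp: PS_topology_def PS_carrier_def)

lemma carrier_PS_group: "carrier (PS_group G) = PS_carrier G"
  by (simp add: PS_group_def)

lemma mult_PS_group:
  "f \<otimes>\<^bsub>PS_group G\<^esub> g = (\<lambda>N\<in>sol_quot_index G. f N \<otimes>\<^bsub>G Mod N\<^esub> g N)"
  by (simp add: PS_group_def)

lemma one_PS_group: "\<one>\<^bsub>PS_group G\<^esub> = (\<lambda>N\<in>sol_quot_index G. N)"
  by (simp add: PS_group_def)

lemma PS_carrier_coordinate:
  "f \<in> PS_carrier G \<Longrightarrow> N \<in> sol_quot_index G \<Longrightarrow> f N \<in> carrier (G Mod N)"
  by (auto simp: PS_carrier_def)

lemma PS_carrier_coset: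
  assumes "f \<in> PS_carrier G" "N \<in> sol_quot_index G"
  shows "\<exists>w\<in>carrier G. f N = N #>\<^bsub>G\<^esub> w"
  using PS_carrier_coordinate[OF assms] by (auto simp: carrier_FactGroup)

lemma PS_carrierI:
  assumes "\<And>N. N \<in> sol_quot_index G \<Longrightarrow> f N \<in> carrier (G Mod N)"
    and "\<And>N M. N \<in> sol_quot_index G \<Longrightarrow> M \<in> sol_quot_index G \<Longrightarrow> N \<subseteq> M \<Longrightarrow> f N \<subseteq> f M"
  shows "restrict f (sol_quot_index G) \<in> PS_carrier G"
  using assms by (auto simp: PS_carrier_def)

lemma PS_carrier_mono:
  "f \<in> PS_carrier G \<Longrightarrow> N \<in> sol_quot_index G \<Longrightarrow> M \<in> sol_quot_index G \<Longrightarrow> N \<subseteq> M \<Longrightarrow> f N \<subseteq> f M"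
  by (auto simp: PS_carrier_def)

lemma PS_carrier_extensional: "f \<in> PS_carrier G \<Longrightarrow> f \<in> extensional (sol_quot_index G)"
  by (auto simp: PS_carrier_def PiE_def)

lemma group_FactGroup_if_in_sol_quot_index: "N \<in> sol_quot_index G \<Longrightarrow> group (G Mod N)"
  using normal.factorgroup_is_group[OF normal_if_in_sol_quot_index] .

lemma monoid_FactGroup_if_in_sol_quot_index: "N \<in> sol_quot_index G \<Longrightarrow> monoid (G Mod N)"
  using group.is_monoid[OF group_FactGroup_if_in_sol_quot_index] .

lemma PS_mult_closed:
  assumes f: "f \<in> PS_carrier G" and g: "g \<in> PS_carrier G"
  shows "f \<otimes>\<^bsub>PS_group G\<^esub> g \<in> PS_carrier G"
  unfolding mult_PS_group
proof (rule PS_carrierI)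
  fix N
  assume N: "N \<in> sol_quot_index G"
  show "f N \<otimes>\<^bsub>G Mod N\<^esub> g N \<in> carrier (G Mod N)"
    by (rule monoid.m_closed[OF monoid_FactGroup_if_in_sol_quot_index[OF N]
          PS_carrier_coordinate[OF f N] PS_carrier_coordinate[OF g N]])
  fix M
  assume "M \<in> sol_quot_index G" "N \<subseteq> M"
  then have "f N \<subseteq> f M" "g N \<subseteq> g M"
    using PS_carrier_mono[OF f N] PS_carrier_mono[OF g N] by simp_all
  then show "f N \<otimes>\<^bsub>G Mod N\<^esub> g N \<subseteq> f M \<otimes>\<^bsub>G Mod M\<^esub> g M"
    by (auto simp: set_mult_def)
qed

lemma PS_one_closed: "\<one>\<^bsub>PS_group G\<^esub> \<in> PS_carrier G"
  unfolding one_PS_group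
proof (rule PS_carrierI)
  fix N
  assume "N \<in> sol_quot_index G"
  then show "N \<in> carrier (G Mod N)"
    using monoid.one_closed[OF monoid_FactGroup_if_in_sol_quot_index] by simp
qed

lemma PS_inv_closed:
  assumes f: "f \<in> PS_carrier G"
  shows "(\<lambda>N\<in>sol_quot_index G. inv\<^bsub>G Mod N\<^esub> f N) \<in> PS_carrier G"
proof (rule PS_carrierI)
  fix N
  assume "N \<in> sol_quot_index G"
  then show "inv\<^bsub>G Mod N\<^esub> f N \<in> carrier (G Mod N)"
    using group.inv_closed[OF group_FactGroup_if_in_sol_quot_index PS_carrier_coordinate[OF f]] by simp
next
  fix N M
  assume NM: "N \<in> sol_quot_index G" "M \<in> sol_quot_index G" "N \<subseteq> M"
  have "inv\<^bsub>G Mod L\<^esub> f L = set_inv\<^bsub>G\<^esub> f L" if L: "L \<in> sol_quot_index G" for L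
    by (rule normal.inv_FactGroup[OF normal_if_in_sol_quot_index[OF L] PS_carrier_coordinate[OF f L]])
  then show "inv\<^bsub>G Mod N\<^esub> f N \<subseteq> inv\<^bsub>G Mod M\<^esub> f M"
    using PS_carrier_mono[OF f NM] NM(1,2) unfolding SET_INV_def by blast
qed

lemma group_PS_group: "group (PS_group G)"
proof (rule groupI)
  fix f g
  assume f: "f \<in> carrier (PS_group G)" and g: "g \<in> carrier (PS_group G)"
  then show "f \<otimes>\<^bsub>PS_group G\<^esub> g \<in> carrier (PS_group G)"
    by (simp add: carrier_PS_group PS_mult_closed)
  fix h
  assume h: "h \<in> carrier (PS_group G)"
  show "f \<otimes>\<^bsub>PS_group G\<^esub> g \<otimes>\<^bsub>PS_group G\<^esub> h = f \<otimes>\<^bsub>PS_group G\<^esub> (g \<otimes>\<^bsub>PS_group G\<^esub> h)"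
    unfolding mult_PS_group
  proof (rule restrict_ext)
    fix N
    assume N: "N \<in> sol_quot_index G"
    then show "(\<lambda>N\<in>sol_quot_index G. f N \<otimes>\<^bsub>G Mod N\<^esub> g N) N \<otimes>\<^bsub>G Mod N\<^esub> h N =
        f N \<otimes>\<^bsub>G Mod N\<^esub> (\<lambda>N\<in>sol_quot_index G. g N \<otimes>\<^bsub>G Mod N\<^esub> h N) N"
      using monoid.m_assoc[OF monoid_FactGroup_if_in_sol_quot_index[OF N]] f g h
      by (simp add: carrier_PS_group PS_carrier_coordinate)
  qed
next
  show "\<one>\<^bsub>PS_group G\<^esub> \<in> carrier (PS_group G)"
    by (simp add: carrier_PS_group PS_one_closed)
next
  fix f
  assume f: "f \<in> carrier (PS_group G)"
  then have f: "f \<in> PS_carrier G"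
    by (simp add: carrier_PS_group)
  show "\<one>\<^bsub>PS_group G\<^esub> \<otimes>\<^bsub>PS_group G\<^esub> f = f"
  proof (rule extensionalityI[OF _ PS_carrier_extensional[OF f]])
    show "\<one>\<^bsub>PS_group G\<^esub> \<otimes>\<^bsub>PS_group G\<^esub> f \<in> extensional (sol_quot_index G)"
      by (simp add: mult_PS_group)
    fix N
    assume N: "N \<in> sol_quot_index G"
    then show "(\<one>\<^bsub>PS_group G\<^esub> \<otimes>\<^bsub>PS_group G\<^esub> f) N = f N"
      using monoid.l_one[OF monoid_FactGroup_if_in_sol_quot_index[OF N] PS_carrier_coordinate[OF f N]]
      by (simp add: mult_PS_group one_PS_group)
  qed
  let ?g = "\<lambda>N\<in>sol_quot_index G. inv\<^bsub>G Mod N\<^esub> f N"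
  have "?g \<otimes>\<^bsub>PS_group G\<^esub> f = \<one>\<^bsub>PS_group G\<^esub>"
    unfolding mult_PS_group one_PS_group
  proof (rule restrict_ext)
    fix N
    assume N: "N \<in> sol_quot_index G"
    then show "?g N \<otimes>\<^bsub>G Mod N\<^esub> f N = N"
      using group.l_inv[OF group_FactGroup_if_in_sol_quot_index[OF N] PS_carrier_coordinate[OF f N]]
      by simp
  qed
  with PS_inv_closed[OF f] show "\<exists>g\<in>carrier (PS_group G). g \<otimes>\<^bsub>PS_group G\<^esub> f = \<one>\<^bsub>PS_group G\<^esub>"
    by (auto simp: carrier_PS_group)
qed

lemma PS_completion_map_hom: "PS_completion_map G \<in> hom G (PS_group G)"
proof (rule homI)
  fix w
  assume "w \<in> carrier G"
  then show "PS_completion_map G w \<in> carrier (PS_group G)"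
    unfolding PS_completion_map_def carrier_PS_group
    by (intro PS_carrierI) (auto simp: carrier_FactGroup r_coset_def)
next
  fix u v
  assume "u \<in> carrier G" "v \<in> carrier G"
  then show "PS_completion_map G (u \<otimes>\<^bsub>G\<^esub> v) = PS_completion_map G u \<otimes>\<^bsub>PS_group G\<^esub> PS_completion_map G v"
    unfolding PS_completion_map_def mult_PS_group
    by (intro restrict_ext) (simp add: normal.rcos_sum normal_if_in_sol_quot_index)
qed

lemma PS_carrier_approx_on_finite:
  assumes G: "group G" and f: "f \<in> PS_carrier G" and J: "finite J" "J \<subseteq> sol_quot_index G"
  shows "\<exists>w\<in>carrier G. \<forall>N\<in>J. f N = N #>\<^bsub>G\<^esub> w"
proof -
  define M where "M = carrier G \<inter> \<Inter>J"
  have M: "M \<in> sol_quot_index G"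
    unfolding M_def by (rule Inter_in_sol_quot_index[OF G J])
  obtain w where w: "w \<in> carrier G" "f M = M #>\<^bsub>G\<^esub> w"
    using PS_carrier_coset[OF f M] by blast
  have "f N = N #>\<^bsub>G\<^esub> w" if N: "N \<in> J" for N
  proof -
    have N_index: "N \<in> sol_quot_index G"
      using N J by blast
    obtain v where v: "v \<in> carrier G" "f N = N #>\<^bsub>G\<^esub> v"
      using PS_carrier_coset[OF f N_index] by blast
    have "M \<subseteq> N"
      using N by (auto simp: M_def)
    then have "f M \<subseteq> f N"
      by (rule PS_carrier_mono[OF f M N_index])
    moreover have "w \<in> f M"
      using w group.rcos_self[OF G w(1) normal_imp_subgroup[OF normal_if_in_sol_quot_index[OF M]]]
      by simp
    ultimately have "w \<in> N #>\<^bsub>G\<^esub> v"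
      using v by blast
    then show ?thesis
      using group.repr_independence[OF G _ v(1) normal_imp_subgroup[OF normal_if_in_sol_quot_index[OF N_index]]] v
      by simp
  qed
  with w show ?thesis
    by blast
qed

lemma PS_completion_map_dense:
  assumes G: "group G" and U: "openin (PS_topology G) U" "f \<in> U"
  shows "\<exists>w\<in>carrier G. PS_completion_map G w \<in> U"
proof -
  let ?I = "sol_quot_index G"
  obtain V where V: "openin (product_topology (\<lambda>N. discrete_topology (carrier (G Mod N))) ?I) V"
    and U_eq: "U = V \<inter> PS_carrier G"
    using U(1) unfolding PS_topology_def openin_subtopology by blast
  have f: "f \<in> V" "f \<in> PS_carrier G"
    using U(2) U_eq by auto
  obtain W where W: "finite {N \<in> ?I. W N \<noteq> carrier (G Mod N)}" "f \<in> Pi\<^sub>E ?I W" "Pi\<^sub>E ?I W \<subseteq> V"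
    using V f(1) unfolding openin_product_topology_alt by fastforce
  obtain w where w: "w \<in> carrier G" "\<forall>N\<in>{N \<in> ?I. W N \<noteq> carrier (G Mod N)}. f N = N #>\<^bsub>G\<^esub> w"
    using PS_carrier_approx_on_finite[OF G f(2) W(1)] by blast
  have embed: "PS_completion_map G w \<in> PS_carrier G"
    using hom_in_carrier[OF PS_completion_map_hom w(1)] by (simp add: carrier_PS_group)
  have "PS_completion_map G w \<in> Pi\<^sub>E ?I W"
  proof (rule PiE_I)
    fix N
    assume N: "N \<in> ?I"
    show "PS_completion_map G w N \<in> W N"
    proof (cases "W N = carrier (G Mod N)")
      case True
      then show ?thesis
        using PS_carrier_coordinate[OF embed N] by simp
    next
      case False
      then show ?thesis
        using w(2) N PiE_mem[OF W(2) N] by (simp add: PS_completion_map_def)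
    qed
  qed (simp add: PS_completion_map_def)
  with W(3) U_eq embed w(1) show ?thesis
    by blast
qed

section \<open>Continuous homomorphisms to \<int>/2\<close>

(* Fixing the values outside the carrier to undefined makes a homomorphism determined by its
   restriction to the carrier, so that the cardinality below counts homomorphisms. *)
definition cont_homs_Z2 :: "('a, 'b) monoid_scheme \<Rightarrow> 'a topology \<Rightarrow> ('a \<Rightarrow> bool) set" where
  "cont_homs_Z2 G T =
    {\<phi> \<in> hom G bool_group \<inter> extensional (carrier G). continuous_map T (discrete_topology UNIV) \<phi>}"

lemma restrict_comp_in_cont_homs_Z2:
  assumes G: "group G" and h: "h \<in> hom G H" "continuous_map T1 T2 h" and T1: "topspace T1 = carrier G"
    and \<psi>: "\<psi> \<in> cont_homs_Z2 H T2"
  shows "restrict (\<psi> \<circ> h) (carrier G) \<in> cont_homs_Z2 G T1"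
proof -
  have \<psi>_hom: "\<psi> \<in> hom H bool_group" and \<psi>_cont: "continuous_map T2 (discrete_topology UNIV) \<psi>"
    using \<psi> by (auto simp: cont_homs_Z2_def)
  have "restrict (\<psi> \<circ> h) (carrier G) \<in> hom G bool_group"
    using hom_compose[OF h(1) \<psi>_hom] by (rule group.hom_eq[OF G]) simp
  moreover have "continuous_map T1 (discrete_topology UNIV) (restrict (\<psi> \<circ> h) (carrier G))"
    using continuous_map_compose[OF h(2) \<psi>_cont] by (rule continuous_map_eq) (simp add: T1)
  ultimately show ?thesis
    by (simp add: cont_homs_Z2_def)
qed

lemma restrict_comp_restrict_comp_inverse:
  assumes "f \<in> extensional B" "\<And>y. y \<in> B \<Longrightarrow> g y \<in> A" "\<And>y. y \<in> B \<Longrightarrow> h (g y) = y"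
  shows "restrict (restrict (f \<circ> h) A \<circ> g) B = f"
  by (rule extensionalityI[OF restrict_extensional assms(1)]) (simp add: assms(2,3))

lemma top_group_iso_obtains_inverse:
  assumes G: "group G" and H: "group H"
    and T1: "topspace T1 = carrier G" and T2: "topspace T2 = carrier H"
    and iso: "top_group_iso G T1 H T2"
  obtains h g where "h \<in> hom G H" "continuous_map T1 T2 h" "g \<in> hom H G" "continuous_map T2 T1 g"
    "\<And>x. x \<in> carrier G \<Longrightarrow> g (h x) = x" "\<And>y. y \<in> carrier H \<Longrightarrow> h (g y) = y"
proof -
  obtain h where h: "h \<in> iso G H" and homeo: "homeomorphic_map T1 T2 h"
    using iso by (auto simp: top_group_iso_def)
  obtain g where "homeomorphic_maps T1 T2 h g"
    using homeo homeomorphic_map_maps by blast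
  then have gh: "\<And>x. x \<in> carrier G \<Longrightarrow> g (h x) = x" and hg: "\<And>y. y \<in> carrier H \<Longrightarrow> h (g y) = y"
    and h_cont: "continuous_map T1 T2 h" and g_cont: "continuous_map T2 T1 g"
    using T1 T2 by (auto simp: homeomorphic_maps_def)
  have "inv_into (carrier G) h \<in> hom H G"
    using group.iso_set_sym[OF G h] by (simp add: iso_def)
  moreover have "g y = inv_into (carrier G) h y" if y: "y \<in> carrier H" for y
  proof -
    have "g y \<in> carrier G"
      using continuous_map_image_subset_topspace[OF g_cont] y T1 T2 by blast
    moreover have "inj_on h (carrier G)"
      using h by (simp add: iso_def bij_betw_def)
    ultimately show ?thesis
      using inv_into_f_f hg[OF y] by metis
  qed
  ultimately have "g \<in> hom H G"
    by (rule group.hom_eq[OF H]) simp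
  moreover have "h \<in> hom G H"
    using h by (simp add: iso_def)
  ultimately show ?thesis
    using that h_cont g_cont gh hg by blast
qed

lemma card_cont_homs_Z2_eq_if_top_group_iso:
  assumes G: "group G" and H: "group H"
    and T1: "topspace T1 = carrier G" and T2: "topspace T2 = carrier H"
    and iso: "top_group_iso G T1 H T2"
  shows "card (cont_homs_Z2 G T1) = card (cont_homs_Z2 H T2)"
proof -
  obtain h g where h: "h \<in> hom G H" "continuous_map T1 T2 h" and g: "g \<in> hom H G" "continuous_map T2 T1 g"
    and gh: "\<And>x. x \<in> carrier G \<Longrightarrow> g (h x) = x" and hg: "\<And>y. y \<in> carrier H \<Longrightarrow> h (g y) = y"
    using top_group_iso_obtains_inverse[OF assms] by blast
  have "bij_betw (\<lambda>\<psi>. restrict (\<psi> \<circ> h) (carrier G)) (cont_homs_Z2 H T2) (cont_homs_Z2 G T1)"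
  proof (rule bij_betw_byWitness[where f' = "\<lambda>\<phi>. restrict (\<phi> \<circ> g) (carrier H)"])
    show "\<forall>\<psi>\<in>cont_homs_Z2 H T2. restrict (restrict (\<psi> \<circ> h) (carrier G) \<circ> g) (carrier H) = \<psi>"
      using hom_in_carrier[OF g(1)] hg
      by (auto simp: cont_homs_Z2_def intro: restrict_comp_restrict_comp_inverse)
    show "\<forall>\<phi>\<in>cont_homs_Z2 G T1. restrict (restrict (\<phi> \<circ> g) (carrier H) \<circ> h) (carrier G) = \<phi>"
      using hom_in_carrier[OF h(1)] gh
      by (auto simp: cont_homs_Z2_def intro: restrict_comp_restrict_comp_inverse)
    show "(\<lambda>\<psi>. restrict (\<psi> \<circ> h) (carrier G)) ` cont_homs_Z2 H T2 \<subseteq> cont_homs_Z2 G T1"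
      using restrict_comp_in_cont_homs_Z2[OF G h T1] by blast
    show "(\<lambda>\<phi>. restrict (\<phi> \<circ> g) (carrier H)) ` cont_homs_Z2 G T1 \<subseteq> cont_homs_Z2 H T2"
      using restrict_comp_in_cont_homs_Z2[OF H g T2] by blast
  qed
  then show ?thesis
    by (simp add: bij_betw_same_card)
qed

lemma cont_homs_Z2_PS_eqI:
  assumes G: "group G"
    and \<phi>: "\<phi> \<in> cont_homs_Z2 (PS_group G) (PS_topology G)" and \<phi>': "\<phi>' \<in> cont_homs_Z2 (PS_group G) (PS_topology G)"
    and eq: "\<And>w. w \<in> carrier G \<Longrightarrow> \<phi> (PS_completion_map G w) = \<phi>' (PS_completion_map G w)"
  shows "\<phi> = \<phi>'"
proof (rule extensionalityI)
  show "\<phi> \<in> extensional (carrier (PS_group G))" "\<phi>' \<in> extensional (carrier (PS_group G))"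
    using \<phi> \<phi>' by (simp_all add: cont_homs_Z2_def)
  fix f
  assume f: "f \<in> carrier (PS_group G)"
  let ?T = "PS_topology G"
  define U where "U = {x \<in> topspace ?T. \<phi> x \<in> {\<phi> f}} \<inter> {x \<in> topspace ?T. \<phi>' x \<in> {\<phi>' f}}"
  have "openin ?T U"
    unfolding U_def using \<phi> \<phi>'
    by (intro openin_Int openin_continuous_map_preimage) (auto simp: cont_homs_Z2_def)
  moreover have "f \<in> U"
    using f by (simp add: U_def topspace_PS_topology carrier_PS_group)
  ultimately obtain w where w: "w \<in> carrier G" "PS_completion_map G w \<in> U"
    using PS_completion_map_dense[OF G] by blast
  then have "\<phi> (PS_completion_map G w) = \<phi> f" "\<phi>' (PS_completion_map G w) = \<phi>' f"
    by (simp_all add: U_def)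
  with eq[OF w(1)] show "\<phi> f = \<phi>' f"
    by simp
qed

definition generator_values ::
    "nat \<Rightarrow> (((nat \<times> bool) list set \<Rightarrow> (nat \<times> bool) list set) \<Rightarrow> bool) \<Rightarrow> nat \<Rightarrow> bool" where
  "generator_values k \<phi> = (\<lambda>i\<in>{..<k}. \<phi> (PS_completion_map (free_group k) [(i, True)]))"

lemma inj_on_generator_values:
  "inj_on (generator_values k) (cont_homs_Z2 (PS_group (free_group k)) (PS_topology (free_group k)))"
proof (rule inj_onI)
  let ?F = "free_group k"
  fix \<phi> \<phi>'
  assume \<phi>: "\<phi> \<in> cont_homs_Z2 (PS_group ?F) (PS_topology ?F)"
    and \<phi>': "\<phi>' \<in> cont_homs_Z2 (PS_group ?F) (PS_topology ?F)"
    and eq: "generator_values k \<phi> = generator_values k \<phi>'"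
  have on_image: "\<psi> (PS_completion_map ?F w) = word_parity (\<lambda>i. \<psi> (PS_completion_map ?F [(i, True)])) w"
    if "\<psi> \<in> cont_homs_Z2 (PS_group ?F) (PS_topology ?F)" "w \<in> carrier ?F" for \<psi> w
  proof -
    have "\<psi> \<in> hom (PS_group ?F) bool_group"
      using that(1) by (simp add: cont_homs_Z2_def)
    then have "\<psi> \<circ> PS_completion_map ?F \<in> hom ?F bool_group"
      by (rule hom_compose[OF PS_completion_map_hom])
    from hom_free_group_bool_eq_word_parity[OF this that(2)] show ?thesis
      by simp
  qed
  show "\<phi> = \<phi>'"
  proof (rule cont_homs_Z2_PS_eqI[OF group_free_group \<phi> \<phi>'])
    fix w
    assume w: "w \<in> carrier ?F"
    have "word_parity (\<lambda>i. \<phi> (PS_completion_map ?F [(i, True)])) w =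
        word_parity (\<lambda>i. \<phi>' (PS_completion_map ?F [(i, True)])) w"
    proof (rule word_parity_cong)
      fix i
      assume "i \<in> fst ` set w"
      then have "i < k"
        using w by (auto simp: carrier_free_group)
      then show "\<phi> (PS_completion_map ?F [(i, True)]) = \<phi>' (PS_completion_map ?F [(i, True)])"
        using fun_cong[OF eq, of i] by (simp add: generator_values_def)
    qed
    then show "\<phi> (PS_completion_map ?F w) = \<phi>' (PS_completion_map ?F w)"
      using on_image[OF \<phi> w] on_image[OF \<phi>' w] by simp
  qed
qed

abbreviation parity_kernel :: "nat \<Rightarrow> (nat \<Rightarrow> bool) \<Rightarrow> (nat \<times> bool) list set" where
  "parity_kernel k c \<equiv> kernel (free_group k) bool_group (word_parity c)"

lemma parity_kernel_in_sol_quot_index: "parity_kernel k c \<in> sol_quot_index (free_group k)"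
proof (rule kernel_in_sol_quot_index)
  show "group_hom (free_group k) bool_group (word_parity c)"
    by (simp add: group_hom_def group_hom_axioms_def group_free_group group_bool_group word_parity_hom)
  show "comm_group bool_group"
    by (rule group.group_comm_groupI[OF group_bool_group]) auto
qed

lemma rcos_parity_kernel_eq_iff:
  assumes "w \<in> carrier (free_group k)"
  shows "parity_kernel k c #>\<^bsub>free_group k\<^esub> w = parity_kernel k c \<longleftrightarrow> \<not> word_parity c w"
proof -
  have "subgroup (parity_kernel k c) (free_group k)"
    using normal_imp_subgroup[OF normal_if_in_sol_quot_index[OF parity_kernel_in_sol_quot_index]] .
  then show ?thesis
    using group.coset_join1[OF group_free_group _ assms] group.coset_join2[OF group_free_group assms]
      assms by (auto simp: kernel_def)
qed

(* The continuous extension of word_parity c to the completion: since parity_kernel k c is one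
   of the indices of the inverse limit, the parity can be read off that single coordinate. *)
definition PS_parity :: "nat \<Rightarrow> (nat \<Rightarrow> bool) \<Rightarrow> ((nat \<times> bool) list set \<Rightarrow> (nat \<times> bool) list set) \<Rightarrow> bool" where
  "PS_parity k c = (\<lambda>f\<in>PS_carrier (free_group k). f (parity_kernel k c) \<noteq> parity_kernel k c)"

lemma PS_parity_eq_word_parity:
  assumes "f \<in> PS_carrier (free_group k)" "w \<in> carrier (free_group k)"
    and "f (parity_kernel k c) = parity_kernel k c #>\<^bsub>free_group k\<^esub> w"
  shows "PS_parity k c f = word_parity c w"
  using assms rcos_parity_kernel_eq_iff[OF assms(2)] by (simp add: PS_parity_def)

lemma PS_parity_in_cont_homs_Z2:
  "PS_parity k c \<in> cont_homs_Z2 (PS_group (free_group k)) (PS_topology (free_group k))"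
proof -
  let ?F = "free_group k" and ?K = "parity_kernel k c"
  have K: "?K \<in> sol_quot_index ?F"
    by (rule parity_kernel_in_sol_quot_index)
  have "PS_parity k c \<in> hom (PS_group ?F) bool_group"
  proof (rule homI)
    fix f g
    assume f: "f \<in> carrier (PS_group ?F)" and g: "g \<in> carrier (PS_group ?F)"
    obtain u where u: "u \<in> carrier ?F" "f ?K = ?K #>\<^bsub>?F\<^esub> u"
      using PS_carrier_coset[OF _ K] f by (auto simp: carrier_PS_group)
    obtain v where v: "v \<in> carrier ?F" "g ?K = ?K #>\<^bsub>?F\<^esub> v"
      using PS_carrier_coset[OF _ K] g by (auto simp: carrier_PS_group)
    have uv: "u \<otimes>\<^bsub>?F\<^esub> v \<in> carrier ?F"
      by (rule monoid.m_closed[OF group.is_monoid[OF group_free_group] u(1) v(1)])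
    have "(f \<otimes>\<^bsub>PS_group ?F\<^esub> g) ?K = ?K #>\<^bsub>?F\<^esub> (u \<otimes>\<^bsub>?F\<^esub> v)"
      using K u v normal.rcos_sum[OF normal_if_in_sol_quot_index[OF K]] by (simp add: mult_PS_group)
    moreover have "f \<otimes>\<^bsub>PS_group ?F\<^esub> g \<in> PS_carrier ?F"
      using f g by (simp add: carrier_PS_group PS_mult_closed)
    ultimately show "PS_parity k c (f \<otimes>\<^bsub>PS_group ?F\<^esub> g) = PS_parity k c f \<otimes>\<^bsub>bool_group\<^esub> PS_parity k c g"
      using f g u v uv PS_parity_eq_word_parity hom_mult[OF word_parity_hom u(1) v(1)]
      by (simp add: carrier_PS_group)
  qed simp
  moreover have "continuous_map (PS_topology ?F) (discrete_topology UNIV) (PS_parity k c)"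
  proof (rule continuous_map_eq)
    have "continuous_map (product_topology (\<lambda>N. discrete_topology (carrier (?F Mod N))) (sol_quot_index ?F))
        (discrete_topology UNIV) ((\<lambda>S. S \<noteq> ?K) \<circ> (\<lambda>f. f ?K))"
      by (rule continuous_map_compose[OF continuous_map_product_projection[OF K]]) simp
    then show "continuous_map (PS_topology ?F) (discrete_topology UNIV) ((\<lambda>S. S \<noteq> ?K) \<circ> (\<lambda>f. f ?K))"
      unfolding PS_topology_def by (rule continuous_map_from_subtopology)
  qed (simp add: topspace_PS_topology PS_parity_def)
  ultimately show ?thesis
    by (simp add: cont_homs_Z2_def PS_parity_def carrier_PS_group)
qed

lemma generator_values_PS_parity:
  assumes "c \<in> (\<Pi>\<^sub>E i\<in>{..<k}. UNIV)"
  shows "generator_values k (PS_parity k c) = c"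
proof
  fix i
  show "generator_values k (PS_parity k c) i = c i"
  proof (cases "i < k")
    case True
    let ?F = "free_group k"
    have "PS_completion_map ?F [(i, True)] \<in> PS_carrier ?F"
      using hom_in_carrier[OF PS_completion_map_hom generator_in_carrier_free_group[OF True]]
      by (simp add: carrier_PS_group)
    then have "PS_parity k c (PS_completion_map ?F [(i, True)]) = word_parity c [(i, True)]"
      by (rule PS_parity_eq_word_parity[OF _ generator_in_carrier_free_group[OF True]])
        (simp add: PS_completion_map_def parity_kernel_in_sol_quot_index)
    then show ?thesis
      using True by (simp add: generator_values_def)
  next
    case False
    then show ?thesis
      using assms by (simp add: generator_values_def PiE_def extensional_def)
  qed
qed

lemma card_cont_homs_Z2_PS_free_group:
  "card (cont_homs_Z2 (PS_group (free_group k)) (PS_topology (free_group k))) = 2 ^ k"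
proof -
  let ?H = "cont_homs_Z2 (PS_group (free_group k)) (PS_topology (free_group k))"
  let ?P = "\<Pi>\<^sub>E i\<in>{..<k}. (UNIV :: bool set)"
  have "generator_values k ` ?H = ?P"
  proof
    show "generator_values k ` ?H \<subseteq> ?P"
      by (auto simp: generator_values_def)
    show "?P \<subseteq> generator_values k ` ?H"
      using generator_values_PS_parity PS_parity_in_cont_homs_Z2 by (metis image_eqI subsetI)
  qed
  then have "bij_betw (generator_values k) ?H ?P"
    using inj_on_generator_values by (simp add: bij_betw_def)
  then show ?thesis
    by (simp add: bij_betw_same_card card_PiE)
qed

theorem mainTheorem7:
  fixes k l :: nat
  assumes "2 \<le> k" and "2 \<le> l" and "k \<noteq> l"
  shows "\<not> top_group_iso (PS_group (free_group k)) (PS_topology (free_group k))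
                         (PS_group (free_group l)) (PS_topology (free_group l))"
proof
  assume "top_group_iso (PS_group (free_group k)) (PS_topology (free_group k))
                         (PS_group (free_group l)) (PS_topology (free_group l))"
  then have "card (cont_homs_Z2 (PS_group (free_group k)) (PS_topology (free_group k))) =
      card (cont_homs_Z2 (PS_group (free_group l)) (PS_topology (free_group l)))"
    by (intro card_cont_homs_Z2_eq_if_top_group_iso group_PS_group)
      (simp_all add: topspace_PS_topology carrier_PS_group)
  then have "(2::nat) ^ k = 2 ^ l"
    by (simp add: card_cont_homs_Z2_PS_free_group)
  with \<open>k \<noteq> l\<close> show False
    by simp
qed

end
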